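(* Danzer's configuration $(35_4)$ is isomorphic to the combinatorial configuration $N(O_4)$ obtained by the $V$-construction from the Odd graph $O_4$.
   Context: Danzer's configuration: take seven 3-dimensional hyperplanes in general position (no five through a common point) in 4-dimensional projective space; they meet by fours in 35 points and by threes in 35 lines, a point being incident with a line iff the triple of hyperplanes defining the line is contained in the quadruple defining the point. Combinatorially: points are the 4-subsets and lines the 3-subsets of $\{1,\dots,7\}$, incidence is containment. The Odd graph $O_4$ is the Kneser graph $K(7,3)$: vertices are the 3-subsets of a 7-element set, adjacent iff disjoint. $V$-construction: for a regular graph $G$ in which no two distinct vertices have the same neighbourhood, $N(G)$ is the incidence structure whose points are the vertices of $G$, whose blocks are the neighbourhoods $N(v)$ of the vertices $v$, with incidence given by membership. Isomorphism of incidence structures means bijections on points and on blocks preserving incidence. *)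

theory Defs
  imports Main
begin

definition incidence_isomorphic ::
  "'p1 set \<Rightarrow> 'b1 set \<Rightarrow> ('p1 \<Rightarrow> 'b1 \<Rightarrow> bool) \<Rightarrow>
   'p2 set \<Rightarrow> 'b2 set \<Rightarrow> ('p2 \<Rightarrow> 'b2 \<Rightarrow> bool) \<Rightarrow> bool" where
  "incidence_isomorphic P1 B1 I1 P2 B2 I2 \<longleftrightarrow>
     (\<exists>f g. bij_betw f P1 P2 \<and> bij_betw g B1 B2 \<and>
            (\<forall>p\<in>P1. \<forall>b\<in>B1. I1 p b \<longleftrightarrow> I2 (f p) (g b)))"

text \<open>Danzer's configuration, combinatorial model: points are the 4-subsets, lines the
3-subsets of {1..7}; a point is incident with a line iff the line is contained in it.\<close>

definition danzer_points :: "nat set set" where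
  "danzer_points = {A. A \<subseteq> {1..7} \<and> card A = 4}"

definition danzer_lines :: "nat set set" where
  "danzer_lines = {L. L \<subseteq> {1..7} \<and> card L = 3}"

definition danzer_incident :: "nat set \<Rightarrow> nat set \<Rightarrow> bool" where
  "danzer_incident p l \<longleftrightarrow> l \<subseteq> p"

definition kneser_vertices :: "nat \<Rightarrow> nat \<Rightarrow> nat set set" where
  "kneser_vertices n k = {A. A \<subseteq> {1..n} \<and> card A = k}"

definition kneser_adj :: "nat set \<Rightarrow> nat set \<Rightarrow> bool" where
  "kneser_adj A B \<longleftrightarrow> A \<inter> B = {}"

definition odd_graph_vertices :: "nat \<Rightarrow> nat set set" where
  "odd_graph_vertices k = kneser_vertices (2 * k - 1) (k - 1)"

definition nbhd :: "'a set \<Rightarrow> ('a \<Rightarrow> 'a \<Rightarrow> bool) \<Rightarrow> 'a \<Rightarrow> 'a set" where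
  "nbhd V E v = {u \<in> V. E v u}"

definition V_points :: "'a set \<Rightarrow> ('a \<Rightarrow> 'a \<Rightarrow> bool) \<Rightarrow> 'a set" where
  "V_points V E = V"

definition V_blocks :: "'a set \<Rightarrow> ('a \<Rightarrow> 'a \<Rightarrow> bool) \<Rightarrow> 'a set set" where
  "V_blocks V E = nbhd V E ` V"

definition V_incident :: "'a \<Rightarrow> 'a set \<Rightarrow> bool" where
  "V_incident x b \<longleftrightarrow> x \<in> b"

end

theory Submission
  imports Defs
begin

text \<open>Over a ground set \<open>U\<close> of size \<open>2k + 1\<close>, complementation is a bijection from the
  \<open>(k+1)\<close>-subsets (points) onto the \<open>k\<close>-subsets (vertices of the Kneser graph), and
  \<open>L \<subseteq> P\<close> holds iff \<open>U - P\<close> is disjoint from \<open>L\<close>, i.e. iff \<open>U - P\<close> lies in the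
  neighbourhood of \<open>L\<close>. So lines go to neighbourhoods; this is injective because for
  \<open>k \<ge> 1\<close> the neighbourhood of \<open>L\<close> covers exactly \<open>U - L\<close>.\<close>

lemma bij_betw_Diff_subsets:
  assumes "finite U" "k \<le> card U"
  shows "bij_betw (\<lambda>A. U - A) {A. A \<subseteq> U \<and> card A = k} {B. B \<subseteq> U \<and> card B = card U - k}"
proof (rule bij_betw_byWitness[where f' = "\<lambda>B. U - B"])
  show "(\<lambda>A. U - A) ` {A. A \<subseteq> U \<and> card A = k} \<subseteq> {B. B \<subseteq> U \<and> card B = card U - k}"
    using assms by (auto simp: card_Diff_subset finite_subset)
  have "card U - (card U - k) = k"
    using assms(2) by simp
  then show "(\<lambda>B. U - B) ` {B. B \<subseteq> U \<and> card B = card U - k} \<subseteq> {A. A \<subseteq> U \<and> card A = k}"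
    using assms(1) by (auto simp: card_Diff_subset finite_subset)
qed auto

lemma Union_kneser_nbhd:
  assumes "finite U" "L \<subseteq> U" "card L = k" "1 \<le> k" "2 * k \<le> card U"
  shows "\<Union> (nbhd {A. A \<subseteq> U \<and> card A = k} kneser_adj L) = U - L"
proof
  show "\<Union> (nbhd {A. A \<subseteq> U \<and> card A = k} kneser_adj L) \<subseteq> U - L"
    by (auto simp: nbhd_def kneser_adj_def)
  show "U - L \<subseteq> \<Union> (nbhd {A. A \<subseteq> U \<and> card A = k} kneser_adj L)"
  proof
    fix x assume x: "x \<in> U - L"
    have "card (U - L - {x}) = card U - k - 1"
      using assms x by (simp add: card_Diff_subset finite_subset)
    then have "k - 1 \<le> card (U - L - {x})"
      using assms(5) by linarith
    then obtain T where T: "T \<subseteq> U - L - {x}" "card T = k - 1" "finite T"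
      by (rule obtain_subset_with_card_n)
    have "x \<notin> T"
      using T(1) by blast
    then have "card (insert x T) = k"
      using T(2,3) assms(4) by simp
    then have "insert x T \<in> nbhd {A. A \<subseteq> U \<and> card A = k} kneser_adj L"
      using T x by (auto simp: nbhd_def kneser_adj_def)
    then show "x \<in> \<Union> (nbhd {A. A \<subseteq> U \<and> card A = k} kneser_adj L)"
      by blast
  qed
qed

lemma inj_on_kneser_nbhd:
  assumes "finite U" "1 \<le> k" "2 * k \<le> card U"
  shows "inj_on (nbhd {A. A \<subseteq> U \<and> card A = k} kneser_adj) {L. L \<subseteq> U \<and> card L = k}"
proof (rule inj_onI)
  fix L L'
  assume L: "L \<in> {L. L \<subseteq> U \<and> card L = k}" and L': "L' \<in> {L. L \<subseteq> U \<and> card L = k}"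
    and eq: "nbhd {A. A \<subseteq> U \<and> card A = k} kneser_adj L = nbhd {A. A \<subseteq> U \<and> card A = k} kneser_adj L'"
  have "U - L = U - L'"
    using Union_kneser_nbhd[OF assms(1) _ _ assms(2,3), of L]
      Union_kneser_nbhd[OF assms(1) _ _ assms(2,3), of L'] L L' eq
    by simp
  with L L' show "L = L'"
    by blast
qed

theorem subsets_configuration_iso_V_kneser:
  assumes "finite U" "card U = 2 * k + 1" "1 \<le> k"
  defines "V \<equiv> {A. A \<subseteq> U \<and> card A = k}"
  shows "incidence_isomorphic {P. P \<subseteq> U \<and> card P = k + 1} V (\<lambda>P L. L \<subseteq> P)
           (V_points V kneser_adj) (V_blocks V kneser_adj) V_incident"
  unfolding incidence_isomorphic_def V_points_def
proof (intro exI conjI)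
  show "bij_betw (\<lambda>P. U - P) {P. P \<subseteq> U \<and> card P = k + 1} V"
    using bij_betw_Diff_subsets[OF assms(1), of "k + 1"] assms(2) by (simp add: V_def)
  show "bij_betw (nbhd V kneser_adj) V (V_blocks V kneser_adj)"
    using inj_on_kneser_nbhd[OF assms(1,3)] assms(2)
    by (simp add: bij_betw_def V_blocks_def V_def)
  show "\<forall>P\<in>{P. P \<subseteq> U \<and> card P = k + 1}. \<forall>L\<in>V.
          L \<subseteq> P \<longleftrightarrow> V_incident (U - P) (nbhd V kneser_adj L)"
    using assms(1,2)
    by (auto simp: V_def V_incident_def nbhd_def kneser_adj_def card_Diff_subset finite_subset)
qed

theorem corollary3p5:
  shows "incidence_isomorphic danzer_points danzer_lines danzer_incident
           (V_points (odd_graph_vertices 4) kneser_adj)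
           (V_blocks (odd_graph_vertices 4) kneser_adj) V_incident"
proof -
  have "odd_graph_vertices 4 = {A. A \<subseteq> {1..7} \<and> card A = 3}"
    by (simp add: odd_graph_vertices_def kneser_vertices_def)
  moreover have "danzer_lines = {A. A \<subseteq> {1..7} \<and> card A = 3}"
    by (simp add: danzer_lines_def)
  moreover have "danzer_points = {P. P \<subseteq> {1..7} \<and> card P = 3 + 1}"
    by (simp add: danzer_points_def)
  moreover have "danzer_incident = (\<lambda>P L. L \<subseteq> P)"
    by (simp add: danzer_incident_def fun_eq_iff)
  ultimately show ?thesis
    using subsets_configuration_iso_V_kneser[of "{1..7::nat}" 3] by simp
qed

end
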